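(* Let $A$ be a vector space with multiplications $\circ_A,\vdash_A,\dashv_A$, and let $\widehat A=A\otimes\mathbb K[t,t^{-1}]$ with the multiplication $$(x\otimes t^i)\cdot(y\otimes t^j)=x\circ_A y\otimes t^{i+j}+(i\,x\vdash_A y-j\,y\dashv_A x)\otimes t^{i+j-1},\quad x,y\in A,\ i,j\in\mathbb Z.$$ Then $(\widehat A,\cdot)$ is a Leibniz algebra if and only if $(A,\circ_A,\vdash_A,\dashv_A)$ is a Gel'fand–Dorfman dialgebra.
   Context: All vector spaces are over a field $\mathbb K$ of characteristic zero ($\widehat A$ may be infinite-dimensional). A Leibniz algebra is a vector space with multiplication $\circ$ satisfying $x\circ(y\circ z)=(x\circ y)\circ z+y\circ(x\circ z)$. A Novikov dialgebra is $(A,\vdash_A,\dashv_A)$ satisfying for all $x,y,z$: (ND1) $x\vdash_A(y\vdash_A z)=(x\vdash_A y)\vdash_A z-(y\dashv_A x)\vdash_A z+y\vdash_A(x\vdash_A z)$; (ND2) $(y\vdash_A z)\dashv_A x=y\vdash_A(z\dashv_A x)-z\dashv_A(y\vdash_A x)+(z\dashv_A y)\dashv_A x$; (ND3) $z\dashv_A(x\vdash_A y)=z\dashv_A(x\dashv_A y)$; (ND4) $(z\dashv_A y)\dashv_A x=(z\dashv_A x)\dashv_A y$; (ND5) $(y\dashv_A x)\vdash_A z=(y\vdash_A z)\dashv_A x=(y\vdash_A x)\vdash_A z$. A Gel'fand–Dorfman dialgebra is $(A,\circ_A,\vdash_A,\dashv_A)$ such that $(A,\circ_A)$ is a Leibniz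 algebra, $(A,\vdash_A,\dashv_A)$ is a Novikov dialgebra, and for all $x,y,z$: (GD1) $x\vdash_A(y\circ_A z)-(x\vdash_A y)\circ_A z-(x\circ_A y)\vdash_A z-y\circ_A(x\vdash_A z)+(x\circ_A z)\dashv_A y=0$; (GD2) $x\circ_A(y\vdash_A z)-(y\circ_A z)\dashv_A x+(y\dashv_A x)\circ_A z-(x\circ_A y)\vdash_A z-y\vdash_A(x\circ_A z)=0$; (GD3) $x\circ_A(z\dashv_A y)+(y\circ_A z)\dashv_A x-z\dashv_A(x\circ_A y)-y\circ_A(z\dashv_A x)-(x\circ_A z)\dashv_A y=0$. *)

theory Defs
  imports Complex_Main
begin

text \<open>The hat algebra A tensor K[t,t^-1] is modelled as
  finitely supported functions int => 'a (the coefficient of t^n is f n).\<close>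

definition bilinear_op :: "('k::field \<Rightarrow> 'a::ab_group_add \<Rightarrow> 'a) \<Rightarrow> ('a \<Rightarrow> 'a \<Rightarrow> 'a) \<Rightarrow> bool" where
  "bilinear_op scale m \<longleftrightarrow>
     (\<forall>x. Vector_Spaces.linear scale scale (\<lambda>y. m x y)) \<and>
     (\<forall>y. Vector_Spaces.linear scale scale (\<lambda>x. m x y))"

definition leibniz_alg :: "('a \<Rightarrow> 'a \<Rightarrow> 'a::ab_group_add) \<Rightarrow> bool" where
  "leibniz_alg m \<longleftrightarrow> (\<forall>x y z. m x (m y z) = m (m x y) z + m y (m x z))"

text \<open>l is the left product (turnstile), r the right product (dashv).\<close>
definition novikov_dialg :: "('a \<Rightarrow> 'a \<Rightarrow> 'a::ab_group_add) \<Rightarrow> ('a \<Rightarrow> 'a \<Rightarrow> 'a) \<Rightarrow> bool" where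
  "novikov_dialg l r \<longleftrightarrow> (\<forall>x y z.
     l x (l y z) = l (l x y) z - l (r y x) z + l y (l x z) \<and>
     r (l y z) x = l y (r z x) - r z (l y x) + r (r z y) x \<and>
     r z (l x y) = r z (r x y) \<and>
     r (r z y) x = r (r z x) y \<and>
     l (r y x) z = r (l y z) x \<and>
     r (l y z) x = l (l y x) z)"

definition gd_dialg :: "('a \<Rightarrow> 'a \<Rightarrow> 'a::ab_group_add) \<Rightarrow> ('a \<Rightarrow> 'a \<Rightarrow> 'a) \<Rightarrow> ('a \<Rightarrow> 'a \<Rightarrow> 'a) \<Rightarrow> bool" where
  "gd_dialg c l r \<longleftrightarrow> leibniz_alg c \<and> novikov_dialg l r \<and> (\<forall>x y z.
     l x (c y z) - c (l x y) z - l (c x y) z - c y (l x z) + r (c x z) y = 0 \<and>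
     c x (l y z) - r (c y z) x + c (r y x) z - l (c x y) z - l y (c x z) = 0 \<and>
     c x (r z y) + r (c y z) x - r z (c x y) - c y (r z x) - r (c x z) y = 0)"

definition supp_int :: "(int \<Rightarrow> 'a::zero) \<Rightarrow> int set" where
  "supp_int f = {i. f i \<noteq> 0}"

text \<open>Bilinear extension of
  (x t^i).(y t^j) = (x o y) t^(i+j) + (i x |- y - j y -| x) t^(i+j-1).\<close>
definition hat_mult :: "('k::field \<Rightarrow> 'a::ab_group_add \<Rightarrow> 'a) \<Rightarrow> ('a \<Rightarrow> 'a \<Rightarrow> 'a) \<Rightarrow> ('a \<Rightarrow> 'a \<Rightarrow> 'a)
    \<Rightarrow> ('a \<Rightarrow> 'a \<Rightarrow> 'a) \<Rightarrow> (int \<Rightarrow> 'a) \<Rightarrow> (int \<Rightarrow> 'a) \<Rightarrow> (int \<Rightarrow> 'a)" where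
  "hat_mult scale c l r f g = (\<lambda>n. \<Sum>i\<in>supp_int f. \<Sum>j\<in>supp_int g.
      (if i + j = n then c (f i) (g j) else 0) +
      (if i + j - 1 = n then scale (of_int i) (l (f i) (g j)) - scale (of_int j) (r (g j) (f i)) else 0))"

definition hat_is_leibniz :: "('k::field \<Rightarrow> 'a::ab_group_add \<Rightarrow> 'a) \<Rightarrow> ('a \<Rightarrow> 'a \<Rightarrow> 'a) \<Rightarrow> ('a \<Rightarrow> 'a \<Rightarrow> 'a)
    \<Rightarrow> ('a \<Rightarrow> 'a \<Rightarrow> 'a) \<Rightarrow> bool" where
  "hat_is_leibniz scale c l r \<longleftrightarrow>
     (\<forall>f g h. finite (supp_int f) \<and> finite (supp_int g) \<and> finite (supp_int h) \<longrightarrow>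
        (let m = hat_mult scale c l r in
           \<forall>n. m f (m g h) n = m (m f g) h n + m g (m f h) n))"

end

theory Submission
  imports Defs "HOL-Library.Function_Algebras"
begin

text \<open>The hat product and the Leibniz identity are linear in every argument, so
  the Leibniz identity holds on all Laurent polynomials once it holds on monomials
  x t^i, y t^j, z t^k.  Their Leibnizator has three coefficients: in degree
  i + j + k the Leibniz identity of c, in degree i + j + k - 1 the combination
  i GD1 + j GD2 - k GD3, and in degree i + j + k - 2 a quadratic polynomial in i, j, k
  whose six coefficients are the Novikov dialgebra identities.  Since i, j, k are
  arbitrary, all these expressions must vanish separately.\<close>

lemma (in vector_space) bilinear_op_module_hom:
  assumes "bilinear_op scale m"
  shows "module_hom scale scale (\<lambda>x. m x z)" "module_hom scale scale (m x)"
  using assms unfolding bilinear_op_def module_hom_iff_linear by auto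

lemma (in vector_space) bilinear_op_simps:
  assumes "bilinear_op scale m"
  shows "m (x + y) z = m x z + m y z" "m x (y + z) = m x y + m x z"
    and "m (x - y) z = m x z - m y z" "m x (y - z) = m x y - m x z"
    and "m (- x) z = - m x z" "m x (- z) = - m x z"
    and "m 0 z = 0" "m x 0 = 0"
    and "m (scale a x) z = scale a (m x z)" "m x (scale a z) = scale a (m x z)"
  using bilinear_op_module_hom[OF assms, THEN module_hom.add]
    bilinear_op_module_hom[OF assms, THEN module_hom.diff]
    bilinear_op_module_hom[OF assms, THEN module_hom.neg]
    bilinear_op_module_hom[OF assms, THEN module_hom.zero]
    bilinear_op_module_hom[OF assms, THEN module_hom.scale]
  by simp_all

definition monom :: "'a::zero \<Rightarrow> int \<Rightarrow> int \<Rightarrow> 'a" where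
  "monom x i = (\<lambda>n. if n = i then x else 0)"

lemma monom_0 [simp]: "monom 0 i = 0"
  by (auto simp: monom_def)

lemma monom_add:
  fixes x y :: "'a::monoid_add"
  shows "monom (x + y) i = monom x i + monom y i"
  by (rule ext) (simp add: monom_def)

lemma monom_diff:
  fixes x y :: "'a::group_add"
  shows "monom (x - y) i = monom x i - monom y i"
  by (rule ext) (simp add: monom_def)

lemma supp_int_monom_subset: "supp_int (monom x i) \<subseteq> {i}"
  by (auto simp: monom_def supp_int_def)

lemma finite_supp_int_monom [simp]: "finite (supp_int (monom x i))"
  using supp_int_monom_subset by (rule finite_subset) simp

lemma finite_supp_int_additive_eq_0:
  fixes F :: "(int \<Rightarrow> 'a::monoid_add) \<Rightarrow> 'b::monoid_add"
  assumes "finite (supp_int f)"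
    and "F 0 = 0"
    and additive: "\<And>g g'. finite (supp_int g) \<Longrightarrow> finite (supp_int g') \<Longrightarrow> F (g + g') = F g + F g'"
    and vanish: "\<And>x i. F (monom x i) = 0"
  shows "F f = 0"
proof -
  have "F f = 0" if "finite S" "supp_int f = S" for f and S
    using that
  proof (induction S arbitrary: f rule: finite_induct)
    case empty
    then have "f = 0"
      by (auto simp: supp_int_def)
    with \<open>F 0 = 0\<close> show ?case by (simp only:)
  next
    case (insert i S)
    have supp: "supp_int (f(i := 0)) = S"
      using insert by (auto simp: supp_int_def)
    have decomp: "f(i := 0) + monom (f i) i = f"
      by (auto simp: monom_def)
    have "F f = F (f(i := 0)) + F (monom (f i) i)"
      using additive[of "f(i := 0)" "monom (f i) i"] supp insert.hyps(1) decomp by simp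
    also have "\<dots> = 0"
      using insert.IH supp vanish by simp
    finally show ?case .
  qed
  with assms(1) show ?thesis by blast
qed

locale hat_algebra = vector_space scale
  for scale :: "'k::field_char_0 \<Rightarrow> 'a::ab_group_add \<Rightarrow> 'a" +
  fixes c l r :: "'a \<Rightarrow> 'a \<Rightarrow> 'a"
  assumes bilinear_c: "bilinear_op scale c"
    and bilinear_l: "bilinear_op scale l"
    and bilinear_r: "bilinear_op scale r"
begin

lemmas bilinear_simps =
  bilinear_op_simps[OF bilinear_c] bilinear_op_simps[OF bilinear_l] bilinear_op_simps[OF bilinear_r]

abbreviation iscale :: "int \<Rightarrow> 'a \<Rightarrow> 'a" where
  "iscale i \<equiv> scale (of_int i)"

abbreviation hmult :: "(int \<Rightarrow> 'a) \<Rightarrow> (int \<Rightarrow> 'a) \<Rightarrow> int \<Rightarrow> 'a" (infixl \<open>\<star>\<close> 70) where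
  "f \<star> g \<equiv> hat_mult scale c l r f g"

definition low_prod :: "int \<Rightarrow> int \<Rightarrow> 'a \<Rightarrow> 'a \<Rightarrow> 'a" where
  "low_prod i j x y = iscale i (l x y) - iscale j (r y x)"

definition hat_term :: "int \<Rightarrow> int \<Rightarrow> 'a \<Rightarrow> 'a \<Rightarrow> int \<Rightarrow> 'a" where
  "hat_term i j x y = monom (c x y) (i + j) + monom (low_prod i j x y) (i + j - 1)"

lemma hat_term_0 [simp]: "hat_term i j 0 y = 0" "hat_term i j x 0 = 0"
  by (simp_all add: hat_term_def low_prod_def bilinear_simps)

lemma hat_term_add:
  "hat_term i j (x + x') y = hat_term i j x y + hat_term i j x' y"
  "hat_term i j x (y + y') = hat_term i j x y + hat_term i j x y'"
  by (simp_all add: hat_term_def low_prod_def bilinear_simps monom_add monom_diff algebra_simps)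

lemma hat_mult_eq_sum:
  assumes "finite S" "finite T" "supp_int f \<subseteq> S" "supp_int g \<subseteq> T"
  shows "(f \<star> g) n = (\<Sum>i\<in>S. \<Sum>j\<in>T. hat_term i j (f i) (g j) n)"
proof -
  have "(f \<star> g) n = (\<Sum>i\<in>supp_int f. \<Sum>j\<in>supp_int g. hat_term i j (f i) (g j) n)"
    by (auto simp: hat_mult_def hat_term_def monom_def low_prod_def intro!: sum.cong)
  also have "\<dots> = (\<Sum>i\<in>supp_int f. \<Sum>j\<in>T. hat_term i j (f i) (g j) n)"
    using assms by (intro sum.cong sum.mono_neutral_left) (auto simp: supp_int_def)
  also have "\<dots> = (\<Sum>i\<in>S. \<Sum>j\<in>T. hat_term i j (f i) (g j) n)"
    using assms by (intro sum.mono_neutral_left) (auto simp: supp_int_def)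
  finally show ?thesis .
qed

lemma hat_mult_0 [simp]: "0 \<star> g = 0" "f \<star> 0 = 0"
  by (auto simp: hat_mult_def supp_int_def)

lemma hat_mult_add_left:
  assumes "finite (supp_int f)" "finite (supp_int f')" "finite (supp_int g)"
  shows "(f + f') \<star> g = f \<star> g + f' \<star> g"
proof
  fix n
  let ?S = "supp_int f \<union> supp_int f'"
  have "((f + f') \<star> g) n = (\<Sum>i\<in>?S. \<Sum>j\<in>supp_int g. hat_term i j ((f + f') i) (g j) n)"
    using assms by (intro hat_mult_eq_sum) (auto simp: supp_int_def)
  also have "\<dots> = (f \<star> g) n + (f' \<star> g) n"
    using assms by (simp add: hat_mult_eq_sum[of ?S "supp_int g"] hat_term_add sum.distrib)
  finally show "((f + f') \<star> g) n = (f \<star> g + f' \<star> g) n" by simp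
qed

lemma hat_mult_add_right:
  assumes "finite (supp_int f)" "finite (supp_int g)" "finite (supp_int g')"
  shows "f \<star> (g + g') = f \<star> g + f \<star> g'"
proof
  fix n
  let ?T = "supp_int g \<union> supp_int g'"
  have "(f \<star> (g + g')) n = (\<Sum>i\<in>supp_int f. \<Sum>j\<in>?T. hat_term i j (f i) ((g + g') j) n)"
    using assms by (intro hat_mult_eq_sum) (auto simp: supp_int_def)
  also have "\<dots> = (f \<star> g) n + (f \<star> g') n"
    using assms by (simp add: hat_mult_eq_sum[of "supp_int f" ?T] hat_term_add sum.distrib)
  finally show "(f \<star> (g + g')) n = (f \<star> g + f \<star> g') n" by simp
qed

lemma finite_supp_int_hat_mult [simp]:
  assumes "finite (supp_int f)" "finite (supp_int g)"
  shows "finite (supp_int (f \<star> g))"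
proof -
  have "supp_int (f \<star> g) \<subseteq> (\<Union>i\<in>supp_int f. \<Union>j\<in>supp_int g. {i + j, i + j - 1})"
  proof
    fix n assume "n \<in> supp_int (f \<star> g)"
    then have "(\<Sum>i\<in>supp_int f. \<Sum>j\<in>supp_int g. hat_term i j (f i) (g j) n) \<noteq> 0"
      using assms by (simp add: supp_int_def hat_mult_eq_sum)
    then obtain i j where "i \<in> supp_int f" "j \<in> supp_int g" "hat_term i j (f i) (g j) n \<noteq> 0"
      by (meson sum.not_neutral_contains_not_neutral)
    then show "n \<in> (\<Union>i\<in>supp_int f. \<Union>j\<in>supp_int g. {i + j, i + j - 1})"
      by (auto simp: hat_term_def monom_def split: if_splits)
  qed
  then show ?thesis
    by (rule finite_subset) (use assms in simp)
qed

lemma hat_mult_monom: "monom x i \<star> monom y j = hat_term i j x y"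
proof
  fix n
  show "(monom x i \<star> monom y j) n = hat_term i j x y n"
    by (simp add: hat_mult_eq_sum[of "{i}" "{j}"] supp_int_monom_subset) (simp add: monom_def)
qed

definition leibnizator :: "(int \<Rightarrow> 'a) \<Rightarrow> (int \<Rightarrow> 'a) \<Rightarrow> (int \<Rightarrow> 'a) \<Rightarrow> int \<Rightarrow> 'a" where
  "leibnizator f g h = f \<star> (g \<star> h) - (f \<star> g) \<star> h - g \<star> (f \<star> h)"

lemma hat_is_leibniz_iff_leibnizator:
  "hat_is_leibniz scale c l r \<longleftrightarrow>
     (\<forall>f g h. finite (supp_int f) \<and> finite (supp_int g) \<and> finite (supp_int h)
        \<longrightarrow> leibnizator f g h = 0)"
  by (simp add: hat_is_leibniz_def Let_def leibnizator_def fun_eq_iff diff_diff_eq)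

lemma leibnizator_0 [simp]:
  "leibnizator 0 g h = 0" "leibnizator f 0 h = 0" "leibnizator f g 0 = 0"
  by (simp_all add: leibnizator_def)

lemma leibnizator_add_left:
  assumes "finite (supp_int f)" "finite (supp_int f')" "finite (supp_int g)" "finite (supp_int h)"
  shows "leibnizator (f + f') g h = leibnizator f g h + leibnizator f' g h"
  using assms by (simp add: leibnizator_def hat_mult_add_left hat_mult_add_right algebra_simps)

lemma leibnizator_add_middle:
  assumes "finite (supp_int f)" "finite (supp_int g)" "finite (supp_int g')" "finite (supp_int h)"
  shows "leibnizator f (g + g') h = leibnizator f g h + leibnizator f g' h"
  using assms by (simp add: leibnizator_def hat_mult_add_left hat_mult_add_right algebra_simps)

lemma leibnizator_add_right:
  assumes "finite (supp_int f)" "finite (supp_int g)" "finite (supp_int h)" "finite (supp_int h')"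
  shows "leibnizator f g (h + h') = leibnizator f g h + leibnizator f g h'"
  using assms by (simp add: leibnizator_def hat_mult_add_right algebra_simps)

lemma leibnizator_eq_0_if_monoms:
  assumes monoms: "\<And>x i y j z k. leibnizator (monom x i) (monom y j) (monom z k) = 0"
    and "finite (supp_int f)" "finite (supp_int g)" "finite (supp_int h)"
  shows "leibnizator f g h = 0"
proof -
  have right: "leibnizator (monom x i) (monom y j) h = 0" if "finite (supp_int h)" for x i y j h
    using that
    by (rule finite_supp_int_additive_eq_0[where F = "leibnizator (monom x i) (monom y j)"])
      (simp_all add: leibnizator_add_right monoms)
  have middle: "leibnizator (monom x i) g h = 0"
    if "finite (supp_int g)" "finite (supp_int h)" for x i g h
    using that(1)
    by (rule finite_supp_int_additive_eq_0[where F = "\<lambda>g. leibnizator (monom x i) g h"])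
      (simp_all add: leibnizator_add_middle right that(2))
  show ?thesis
    using assms(2)
    by (rule finite_supp_int_additive_eq_0[where F = "\<lambda>f. leibnizator f g h"])
      (simp_all add: leibnizator_add_left middle assms(3,4))
qed

lemma hat_mult_monom_monom_right:
  "monom x i \<star> (monom y j \<star> monom z k) =
     monom (c x (c y z)) (i + j + k)
     + monom (low_prod i (j + k) x (c y z) + c x (low_prod j k y z)) (i + j + k - 1)
     + monom (low_prod i (j + k - 1) x (low_prod j k y z)) (i + j + k - 2)"
  by (simp add: hat_mult_monom hat_term_def hat_mult_add_right monom_add algebra_simps)

lemma hat_mult_monom_monom_left:
  "(monom x i \<star> monom y j) \<star> monom z k =
     monom (c (c x y) z) (i + j + k)
     + monom (low_prod (i + j) k (c x y) z + c (low_prod i j x y) z) (i + j + k - 1)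
     + monom (low_prod (i + j - 1) k (low_prod i j x y) z) (i + j + k - 2)"
  by (simp add: hat_mult_monom hat_term_def hat_mult_add_left monom_add algebra_simps)

definition leib_coeff0 :: "'a \<Rightarrow> 'a \<Rightarrow> 'a \<Rightarrow> 'a" where
  "leib_coeff0 x y z = c x (c y z) - (c (c x y) z + c y (c x z))"

definition leib_coeff1 :: "int \<Rightarrow> int \<Rightarrow> int \<Rightarrow> 'a \<Rightarrow> 'a \<Rightarrow> 'a \<Rightarrow> 'a" where
  "leib_coeff1 i j k x y z =
     low_prod i (j + k) x (c y z) + c x (low_prod j k y z)
     - (low_prod (i + j) k (c x y) z + c (low_prod i j x y) z)
     - (low_prod j (i + k) y (c x z) + c y (low_prod i k x z))"

definition leib_coeff2 :: "int \<Rightarrow> int \<Rightarrow> int \<Rightarrow> 'a \<Rightarrow> 'a \<Rightarrow> 'a \<Rightarrow> 'a" where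
  "leib_coeff2 i j k x y z =
     low_prod i (j + k - 1) x (low_prod j k y z)
     - low_prod (i + j - 1) k (low_prod i j x y) z
     - low_prod j (i + k - 1) y (low_prod i k x z)"

lemma leibnizator_monom:
  "leibnizator (monom x i) (monom y j) (monom z k) =
     monom (leib_coeff0 x y z) (i + j + k) + monom (leib_coeff1 i j k x y z) (i + j + k - 1)
     + monom (leib_coeff2 i j k x y z) (i + j + k - 2)"
proof -
  have swapped: "monom y j \<star> (monom x i \<star> monom z k) =
     monom (c y (c x z)) (i + j + k)
     + monom (low_prod j (i + k) y (c x z) + c y (low_prod i k x z)) (i + j + k - 1)
     + monom (low_prod j (i + k - 1) y (low_prod i k x z)) (i + j + k - 2)"
    using hat_mult_monom_monom_right[of y j x i z k] unfolding add.commute[of j i] .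
  show ?thesis
    by (simp add: leibnizator_def hat_mult_monom_monom_right hat_mult_monom_monom_left swapped
        leib_coeff0_def leib_coeff1_def leib_coeff2_def monom_add monom_diff algebra_simps)
qed

lemma leibnizator_monom_eq_0_iff:
  "leibnizator (monom x i) (monom y j) (monom z k) = 0 \<longleftrightarrow>
     leib_coeff0 x y z = 0 \<and> leib_coeff1 i j k x y z = 0 \<and> leib_coeff2 i j k x y z = 0"
proof
  assume "leibnizator (monom x i) (monom y j) (monom z k) = 0"
  then have vanish: "leibnizator (monom x i) (monom y j) (monom z k) n = 0" for n
    by simp
  show "leib_coeff0 x y z = 0 \<and> leib_coeff1 i j k x y z = 0 \<and> leib_coeff2 i j k x y z = 0"
    using vanish[of "i + j + k"] vanish[of "i + j + k - 1"] vanish[of "i + j + k - 2"]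
    unfolding leibnizator_monom by (simp add: monom_def)
qed (simp add: leibnizator_monom)

lemma leibniz_alg_iff_leib_coeff0: "leibniz_alg c \<longleftrightarrow> (\<forall>x y z. leib_coeff0 x y z = 0)"
  by (simp add: leibniz_alg_def leib_coeff0_def)

definition gd1 :: "'a \<Rightarrow> 'a \<Rightarrow> 'a \<Rightarrow> 'a" where
  "gd1 x y z = l x (c y z) - c (l x y) z - l (c x y) z - c y (l x z) + r (c x z) y"

definition gd2 :: "'a \<Rightarrow> 'a \<Rightarrow> 'a \<Rightarrow> 'a" where
  "gd2 x y z = c x (l y z) - r (c y z) x + c (r y x) z - l (c x y) z - l y (c x z)"

definition gd3 :: "'a \<Rightarrow> 'a \<Rightarrow> 'a \<Rightarrow> 'a" where
  "gd3 x y z = c x (r z y) + r (c y z) x - r z (c x y) - c y (r z x) - r (c x z) y"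

lemma gd_dialg_iff:
  "gd_dialg c l r \<longleftrightarrow> leibniz_alg c \<and> novikov_dialg l r \<and>
     (\<forall>x y z. gd1 x y z = 0 \<and> gd2 x y z = 0 \<and> gd3 x y z = 0)"
  by (simp add: gd_dialg_def gd1_def gd2_def gd3_def)

lemma leib_coeff1_expand:
  "leib_coeff1 i j k x y z = iscale i (gd1 x y z) + iscale j (gd2 x y z) - iscale k (gd3 x y z)"
  by (simp add: leib_coeff1_def low_prod_def gd1_def gd2_def gd3_def bilinear_simps algebra_simps)

lemma leib_coeff1_eq_0_iff:
  "(\<forall>i j k x y z. leib_coeff1 i j k x y z = 0) \<longleftrightarrow>
     (\<forall>x y z. gd1 x y z = 0 \<and> gd2 x y z = 0 \<and> gd3 x y z = 0)"
proof
  assume vanish: "\<forall>i j k x y z. leib_coeff1 i j k x y z = 0"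
  show "\<forall>x y z. gd1 x y z = 0 \<and> gd2 x y z = 0 \<and> gd3 x y z = 0"
  proof (intro allI)
    fix x y z
    show "gd1 x y z = 0 \<and> gd2 x y z = 0 \<and> gd3 x y z = 0"
      using vanish[rule_format, of 1 0 0 x y z] vanish[rule_format, of 0 1 0 x y z]
        vanish[rule_format, of 0 0 1 x y z]
      by (simp add: leib_coeff1_expand)
  qed
qed (simp add: leib_coeff1_expand)

text \<open>nov2 and nov5 are ND2 and the second equation of ND5 with x and y swapped;
  nov6 is ND2 with its term z \<stileturn> (y \<turnstile> x) rewritten by ND3.\<close>

definition nov1 :: "'a \<Rightarrow> 'a \<Rightarrow> 'a \<Rightarrow> 'a" where
  "nov1 x y z = l x (l y z) - l (l x y) z + l (r y x) z - l y (l x z)"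

definition nov2 :: "'a \<Rightarrow> 'a \<Rightarrow> 'a \<Rightarrow> 'a" where
  "nov2 x y z = r (l x z) y - l x (r z y) + r z (l x y) - r (r z x) y"

definition nov3 :: "'a \<Rightarrow> 'a \<Rightarrow> 'a \<Rightarrow> 'a" where
  "nov3 x y z = l (r y x) z - r (l y z) x"

definition nov4 :: "'a \<Rightarrow> 'a \<Rightarrow> 'a \<Rightarrow> 'a" where
  "nov4 x y z = r (r z y) x - r (r z x) y"

definition nov5 :: "'a \<Rightarrow> 'a \<Rightarrow> 'a \<Rightarrow> 'a" where
  "nov5 x y z = r (l x z) y - l (l x y) z"

definition nov6 :: "'a \<Rightarrow> 'a \<Rightarrow> 'a \<Rightarrow> 'a" where
  "nov6 x y z = r (r z y) x - r z (r y x) + l y (r z x) - r (l y z) x"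

lemma novikov_dialg_iff:
  "novikov_dialg l r \<longleftrightarrow> (\<forall>x y z. nov1 x y z = 0 \<and> nov2 x y z = 0 \<and> nov3 x y z = 0
     \<and> nov4 x y z = 0 \<and> nov5 x y z = 0 \<and> nov6 x y z = 0)"
proof
  assume "novikov_dialg l r"
  note nd = this[unfolded novikov_dialg_def, rule_format]
  show "\<forall>x y z. nov1 x y z = 0 \<and> nov2 x y z = 0 \<and> nov3 x y z = 0
     \<and> nov4 x y z = 0 \<and> nov5 x y z = 0 \<and> nov6 x y z = 0"
  proof (intro allI conjI)
    fix x y z
    have nd1: "l x (l y z) = l (l x y) z - l (r y x) z + l y (l x z)"
      and nd2: "r (l y z) x = l y (r z x) - r z (l y x) + r (r z y) x"
      and nd2': "r (l x z) y = l x (r z y) - r z (l x y) + r (r z x) y"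
      and nd3: "r z (l y x) = r z (r y x)"
      and nd4: "r (r z y) x = r (r z x) y"
      and nd5: "l (r y x) z = r (l y z) x"
      and nd5': "r (l x z) y = l (l x y) z"
      using nd[of x y z] nd[of y x z] by blast+
    show "nov1 x y z = 0" unfolding nov1_def nd1 by (simp add: algebra_simps)
    show "nov2 x y z = 0" unfolding nov2_def nd2' by (simp add: algebra_simps)
    show "nov3 x y z = 0" unfolding nov3_def nd5 by simp
    show "nov4 x y z = 0" unfolding nov4_def nd4 by simp
    show "nov5 x y z = 0" unfolding nov5_def nd5' by simp
    show "nov6 x y z = 0" unfolding nov6_def nd2 nd3 by (simp add: algebra_simps)
  qed
next
  assume "\<forall>x y z. nov1 x y z = 0 \<and> nov2 x y z = 0 \<and> nov3 x y z = 0
     \<and> nov4 x y z = 0 \<and> nov5 x y z = 0 \<and> nov6 x y z = 0"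
  note nov = this[rule_format]
  show "novikov_dialg l r"
    unfolding novikov_dialg_def
  proof (intro allI conjI)
    fix x y z
    show "l x (l y z) = l (l x y) z - l (r y x) z + l y (l x z)"
      using nov[of x y z] by (simp add: nov1_def algebra_simps)
    show "r (l y z) x = l y (r z x) - r z (l y x) + r (r z y) x"
      using nov[of y x z] by (simp add: nov2_def algebra_simps)
    show "r z (l x y) = r z (r x y)"
      using nov[of x y z] nov[of y x z] by (simp add: nov2_def nov6_def algebra_simps)
    show "r (r z y) x = r (r z x) y"
      using nov[of x y z] by (simp add: nov4_def algebra_simps)
    show "l (r y x) z = r (l y z) x"
      using nov[of x y z] by (simp add: nov3_def algebra_simps)
    show "r (l y z) x = l (l y x) z"
      using nov[of y x z] by (simp add: nov5_def algebra_simps)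
  qed
qed

lemma leib_coeff2_expand:
  "leib_coeff2 i j k x y z =
     iscale (i * j) (nov1 x y z) + iscale (i * k) (nov2 x y z) + iscale (j * (j - 1)) (nov3 x y z)
     + iscale (k * (k - 1)) (nov4 x y z) + iscale (i * (i - 1)) (nov5 x y z)
     + iscale (j * k) (nov6 x y z)"
  by (simp add: leib_coeff2_def low_prod_def nov1_def nov2_def nov3_def nov4_def nov5_def nov6_def
      bilinear_simps algebra_simps)

lemma leib_coeff2_eq_0_iff:
  "(\<forall>i j k x y z. leib_coeff2 i j k x y z = 0) \<longleftrightarrow> novikov_dialg l r"
proof
  assume vanish: "\<forall>i j k x y z. leib_coeff2 i j k x y z = 0"
  have "nov1 x y z = 0 \<and> nov2 x y z = 0 \<and> nov3 x y z = 0
     \<and> nov4 x y z = 0 \<and> nov5 x y z = 0 \<and> nov6 x y z = 0" for x y z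
    \<comment> \<open>the instances with an index 2 need 2 \<noteq> 0 in the field\<close>
    using vanish[rule_format, of 1 1 0 x y z] vanish[rule_format, of 1 0 1 x y z]
      vanish[rule_format, of 0 2 0 x y z] vanish[rule_format, of 0 0 2 x y z]
      vanish[rule_format, of 2 0 0 x y z] vanish[rule_format, of 0 1 1 x y z]
    by (simp add: leib_coeff2_expand)
  then show "novikov_dialg l r"
    by (simp add: novikov_dialg_iff)
qed (simp add: novikov_dialg_iff leib_coeff2_expand)

lemma hat_is_leibniz_iff_gd_dialg: "hat_is_leibniz scale c l r \<longleftrightarrow> gd_dialg c l r"
proof -
  have "hat_is_leibniz scale c l r \<longleftrightarrow>
      (\<forall>x i y j z k. leibnizator (monom x i) (monom y j) (monom z k) = 0)"
    unfolding hat_is_leibniz_iff_leibnizator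
    using leibnizator_eq_0_if_monoms finite_supp_int_monom by blast
  also have "\<dots> \<longleftrightarrow> (\<forall>x y z. leib_coeff0 x y z = 0) \<and>
      (\<forall>i j k x y z. leib_coeff1 i j k x y z = 0) \<and> (\<forall>i j k x y z. leib_coeff2 i j k x y z = 0)"
    unfolding leibnizator_monom_eq_0_iff by blast
  also have "\<dots> \<longleftrightarrow> gd_dialg c l r"
    unfolding gd_dialg_iff leibniz_alg_iff_leib_coeff0 leib_coeff1_eq_0_iff leib_coeff2_eq_0_iff
    by blast
  finally show ?thesis .
qed

end

theorem proposition3p13:
  fixes scale :: "'k::field_char_0 \<Rightarrow> 'a::ab_group_add \<Rightarrow> 'a"
    and c l r :: "'a \<Rightarrow> 'a \<Rightarrow> 'a"
  assumes "vector_space scale"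
    and "bilinear_op scale c" and "bilinear_op scale l" and "bilinear_op scale r"
  shows "hat_is_leibniz scale c l r \<longleftrightarrow> gd_dialg c l r"
proof -
  interpret hat_algebra scale c l r
    using assms by (simp add: hat_algebra_def hat_algebra_axioms_def)
  show ?thesis
    by (rule hat_is_leibniz_iff_gd_dialg)
qed

end
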